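(* Let $\mathbf{R}^{\mathrm{o}}$ be a finite set of obligations and $\mathbf{R}=(\emptyset,\mathbf{R}^{\mathrm{o}})$. Let $a,x$ be Boolean formulas, let the overriding relation $\triangleright$ be computed relative to $\Gamma=\{\Diamond a\}$, and let entailment range over replete $\mathbf{R}$-ordered models. If $x\in\bigcap\mathit{outf}(\mathbf{R}^{\mathrm{o}}_{\triangleright},a,\{a\})$ (with underlying I/O operation $out_4^{+}$), then $(\{\Diamond a\},\mathbf{R})\mid\sim\bigcirc(x/a)$.
   Context: Boolean formulas are built from propositional letters with the classical connectives; $\models_{\mathrm{PL}}$ is classical propositional entailment, $\models_{\mathrm{S5}}$ entailment in S5; $\Diamond A$ abbreviates $\neg\Box\neg A$, and $w\models\Box A$ iff $A$ holds at every world of the model. An obligation is $\bigcirc(B/A)$ with $A,B$ Boolean; body $b(\bigcirc(B/A))=A$, head $h(\bigcirc(B/A))=B$. Overriding relative to $\Gamma$: $r_j\triangleright r_i$ iff (i) $\{h(r_i),h(r_j)\}\cup\Gamma\models_{\mathrm{S5}}\bot$; (ii) $b(r_j)\models_{\mathrm{PL}}b(r_i)$ and $b(r_i)\not\models_{\mathrm{PL}}b(r_j)$; (iii) $\{h(r_i),b(r_j)\}\not\models_{\mathrm{PL}}\bot$. An $\mathbf{R}$-ordered model (no normality conditionals) is $M=(W,\succeq_N,\succeq_I,v)$, $W\neq\emptyset$, $v$ a valuation, $\succeq_N=W\times W$, and $w_1\succeq_I w_2$ iff $V(w_1)\subseteq V(w_2)$, where $V(w)=\{r_i\in\mathbf{R}^{\mathrm{o}}: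 w\models b(r_i)\wedge\neg h(r_i)$ and $w\not\models b(r_j)$ for all $r_j\in\mathbf{R}^{\mathrm{o}}$ with $r_j\triangleright r_i\}$. $\max_{\succeq}(X)=\{w\in X:\forall u\in X(u\succeq w\Rightarrow w\succeq u)\}$; $\Vert A\Vert$ = set of worlds where $A$ holds. For $U,U'\subseteq W$, $U\succeq_I^{s}U'$ iff for every $u'\in U'$ there is $u\in U$ with $u\succeq_I u'$. Truth of obligations: $w\models\bigcirc(B/A)$ iff $\max_{\succeq_N}(\Vert A\wedge\neg B\Vert)\not\succeq_I^{s}\max_{\succeq_N}(\Vert A\wedge B\Vert)$. $M$ is replete if every PL-consistent Boolean formula holds at some world. $(\Gamma,\mathbf{R})\mid\sim\varphi$ iff in every (replete) $\mathbf{R}$-ordered model, every world satisfying all of $\Gamma$ satisfies $\varphi$. I/O logic: for a set $H$ of pairs of Boolean formulas, $\mathrm{m}(H)=\{a\rightarrow x:(a,x)\in H\}$, $out_4^{+}(H,a)=\{x:\{a\}\cup\mathrm{m}(H)\models_{\mathrm{PL}}x\}$; $\mathit{maxf}(N,a,C)$ is the set of $\subseteq$-maximal $H\subseteq N$ with $out_4^{+}(H,a)\cup C$ PL-consistent; $\mathit{outf}(N,a,C)=\{out_4^{+}(H,a):H\in\mathit{maxf}(N,a,C)\}$. Translation: for $r_i=\bigcirc(x/a)$, $D(r_i)=\{r_j\in\mathbf{R}^{\mathrm{o}}:r_j\triangleright r_i\}$, $r_i^{\triangleright}=(a\wedge\bigwedge_{r_j\in D(r_i)}\neg b(r_j),x)$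 if $D(r_i)\neq\emptyset$ and $(a,x)$ otherwise; $\mathbf{R}^{\mathrm{o}}_{\triangleright}=\{r^{\triangleright}:r\in\mathbf{R}^{\mathrm{o}}\}$. *)

theory Defs
  imports Main
begin

datatype 'p form = Var 'p | Neg "'p form" | And "'p form" "'p form"
  | Or "'p form" "'p form" | Imp "'p form" "'p form"

fun pl_sat :: "('p \<Rightarrow> bool) \<Rightarrow> 'p form \<Rightarrow> bool" where
  "pl_sat val (Var p) = val p"
| "pl_sat val (Neg A) = (\<not> pl_sat val A)"
| "pl_sat val (And A B) = (pl_sat val A \<and> pl_sat val B)"
| "pl_sat val (Or A B) = (pl_sat val A \<or> pl_sat val B)"
| "pl_sat val (Imp A B) = (pl_sat val A \<longrightarrow> pl_sat val B)"

definition pl_entails :: "'p form set \<Rightarrow> 'p form \<Rightarrow> bool" where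
  "pl_entails X x \<longleftrightarrow> (\<forall>val. (\<forall>y\<in>X. pl_sat val y) \<longrightarrow> pl_sat val x)"

definition pl_consistent :: "'p form set \<Rightarrow> bool" where
  "pl_consistent X \<longleftrightarrow> (\<exists>val. \<forall>y\<in>X. pl_sat val y)"

datatype 'p mform = MAtom 'p | MNeg "'p mform" | MAnd "'p mform" "'p mform"
  | MOr "'p mform" "'p mform" | MImp "'p mform" "'p mform" | MBox "'p mform"

fun embed :: "'p form \<Rightarrow> 'p mform" where
  "embed (Var p) = MAtom p"
| "embed (Neg A) = MNeg (embed A)"
| "embed (And A B) = MAnd (embed A) (embed B)"
| "embed (Or A B) = MOr (embed A) (embed B)"
| "embed (Imp A B) = MImp (embed A) (embed B)"

definition Dia :: "'p mform \<Rightarrow> 'p mform" where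
  "Dia A = MNeg (MBox (MNeg A))"

fun mtrue :: "'w set \<Rightarrow> ('w \<Rightarrow> 'p \<Rightarrow> bool) \<Rightarrow> 'w \<Rightarrow> 'p mform \<Rightarrow> bool" where
  "mtrue W v w (MAtom p) = v w p"
| "mtrue W v w (MNeg A) = (\<not> mtrue W v w A)"
| "mtrue W v w (MAnd A B) = (mtrue W v w A \<and> mtrue W v w B)"
| "mtrue W v w (MOr A B) = (mtrue W v w A \<or> mtrue W v w B)"
| "mtrue W v w (MImp A B) = (mtrue W v w A \<longrightarrow> mtrue W v w B)"
| "mtrue W v w (MBox A) = (\<forall>u\<in>W. mtrue W v u A)"

text \<open>S5 (universal models; w.l.o.g. worlds are valuations): Gamma entails falsum.\<close>
definition s5_inconsistent :: "'p mform set \<Rightarrow> bool" where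
  "s5_inconsistent G \<longleftrightarrow>
     (\<forall>W :: ('p \<Rightarrow> bool) set. \<forall>w\<in>W. \<not> (\<forall>g\<in>G. mtrue W (\<lambda>u. u) w g))"

text \<open>An obligation O(B/A) is represented as the pair (A, B).\<close>
type_synonym 'p obl = "'p form \<times> 'p form"

definition body :: "'p obl \<Rightarrow> 'p form" where "body r = fst r"
definition head :: "'p obl \<Rightarrow> 'p form" where "head r = snd r"

definition overrides :: "'p mform set \<Rightarrow> 'p obl \<Rightarrow> 'p obl \<Rightarrow> bool" where
  "overrides G rj ri \<longleftrightarrow>
     s5_inconsistent ({embed (head ri), embed (head rj)} \<union> G)
   \<and> pl_entails {body rj} (body ri) \<and> \<not> pl_entails {body ri} (body rj)
   \<and> pl_consistent {head ri, body rj}"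

definition Vset :: "'p mform set \<Rightarrow> 'p obl set \<Rightarrow> ('p \<Rightarrow> bool) \<Rightarrow> 'p obl set" where
  "Vset G Ro val = {ri \<in> Ro. pl_sat val (body ri) \<and> \<not> pl_sat val (head ri)
      \<and> (\<forall>rj\<in>Ro. overrides G rj ri \<longrightarrow> \<not> pl_sat val (body rj))}"

definition geN :: "'w set \<Rightarrow> 'w \<Rightarrow> 'w \<Rightarrow> bool" where
  "geN W w1 w2 \<longleftrightarrow> w1 \<in> W \<and> w2 \<in> W"

definition geI :: "'p mform set \<Rightarrow> 'p obl set \<Rightarrow> ('w \<Rightarrow> 'p \<Rightarrow> bool) \<Rightarrow> 'w \<Rightarrow> 'w \<Rightarrow> bool" where
  "geI G Ro v w1 w2 \<longleftrightarrow> Vset G Ro (v w1) \<subseteq> Vset G Ro (v w2)"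

definition maxrel :: "('w \<Rightarrow> 'w \<Rightarrow> bool) \<Rightarrow> 'w set \<Rightarrow> 'w set" where
  "maxrel R X = {w \<in> X. \<forall>u\<in>X. R u w \<longrightarrow> R w u}"

definition ext :: "'w set \<Rightarrow> ('w \<Rightarrow> 'p \<Rightarrow> bool) \<Rightarrow> 'p form \<Rightarrow> 'w set" where
  "ext W v A = {w \<in> W. pl_sat (v w) A}"

definition strong_ge :: "('w \<Rightarrow> 'w \<Rightarrow> bool) \<Rightarrow> 'w set \<Rightarrow> 'w set \<Rightarrow> bool" where
  "strong_ge R U U' \<longleftrightarrow> (\<forall>u'\<in>U'. \<exists>u\<in>U. R u u')"

text \<open>w |= O(B/A) in the R-ordered model (W, v), overriding relative to G.\<close>
definition obl_true :: "'p mform set \<Rightarrow> 'p obl set \<Rightarrow> 'w set \<Rightarrow> ('w \<Rightarrow> 'p \<Rightarrow> bool) \<Rightarrow> 'w \<Rightarrow> 'p obl \<Rightarrow> bool" where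
  "obl_true G Ro W v w r \<longleftrightarrow>
     \<not> strong_ge (geI G Ro v)
         (maxrel (geN W) (ext W v (And (body r) (Neg (head r)))))
         (maxrel (geN W) (ext W v (And (body r) (head r))))"

definition replete :: "'w set \<Rightarrow> ('w \<Rightarrow> 'p \<Rightarrow> bool) \<Rightarrow> bool" where
  "replete W v \<longleftrightarrow> (\<forall>A. pl_consistent {A} \<longrightarrow> (\<exists>w\<in>W. pl_sat (v w) A))"

definition mat :: "'p obl set \<Rightarrow> 'p form set" where
  "mat H = (\<lambda>(a, x). Imp a x) ` H"

definition out4p :: "'p obl set \<Rightarrow> 'p form \<Rightarrow> 'p form set" where
  "out4p H a = {x. pl_entails ({a} \<union> mat H) x}"

definition maxf :: "'p obl set \<Rightarrow> 'p form \<Rightarrow> 'p form set \<Rightarrow> 'p obl set set" where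
  "maxf N a C = {H. H \<subseteq> N \<and> pl_consistent (out4p H a \<union> C)
      \<and> (\<forall>H'. H \<subset> H' \<and> H' \<subseteq> N \<longrightarrow> \<not> pl_consistent (out4p H' a \<union> C))}"

definition outf :: "'p obl set \<Rightarrow> 'p form \<Rightarrow> 'p form set \<Rightarrow> 'p form set set" where
  "outf N a C = (\<lambda>H. out4p H a) ` maxf N a C"

definition Dov :: "'p mform set \<Rightarrow> 'p obl set \<Rightarrow> 'p obl \<Rightarrow> 'p obl set" where
  "Dov G Ro ri = {rj \<in> Ro. overrides G rj ri}"

text \<open>a \<and> (conjunction of negated bodies of the overriders), using some enumeration
  of the finite set D(ri).\<close>
definition transl :: "'p mform set \<Rightarrow> 'p obl set \<Rightarrow> 'p obl \<Rightarrow> 'p obl" where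
  "transl G Ro ri =
     (if Dov G Ro ri \<noteq> {}
      then (foldr (\<lambda>rj acc. And acc (Neg (body rj)))
              (SOME xs. set xs = Dov G Ro ri \<and> distinct xs) (body ri), head ri)
      else (body ri, head ri))"

definition transl_set :: "'p mform set \<Rightarrow> 'p obl set \<Rightarrow> 'p obl set" where
  "transl_set G Ro = transl G Ro ` Ro"

end

theory Submission
  imports Defs
begin

text \<open>Pick a maximal family \<open>H\<close> of translated norms; it exists because \<open>\<Diamond>a\<close> makes
  \<open>a\<close> consistent, and \<open>x\<close> follows from \<open>a\<close> and the materialisations of \<open>H\<close>. By
  repleteness some world \<open>u'\<close> satisfies \<open>a\<close> together with these materialisations, hence
  also \<open>x\<close>. A norm whose translation lies in \<open>H\<close> is violated (in the sense of \<open>V\<close>)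
  exactly where its translation fails, so \<open>V(u')\<close> contains no such norm. Any
  \<open>a \<and> \<not>x\<close>-world \<open>u\<close> with \<open>V(u) \<subseteq> V(u')\<close> would therefore satisfy every
  materialisation in \<open>H\<close>, and with it \<open>x\<close>. So no \<open>a \<and> \<not>x\<close>-world is at least as
  good as \<open>u'\<close>, which is \<open>\<circle>(x/a)\<close>.\<close>

lemma mtrue_embed [simp]: "mtrue W v u (embed A) \<longleftrightarrow> pl_sat (v u) A"
  by (induction A) auto

lemma pl_consistent_subset: "pl_consistent Y \<Longrightarrow> X \<subseteq> Y \<Longrightarrow> pl_consistent X"
  unfolding pl_consistent_def by blast

lemma pl_sat_foldr_And:
  "pl_sat val (foldr And xs b) \<longleftrightarrow> pl_sat val b \<and> (\<forall>y\<in>set xs. pl_sat val y)"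
  by (induction xs) auto

lemma replete_sat_finite:
  fixes X :: "'p form set"
  assumes "replete W v" "finite X" "pl_consistent X"
  obtains w where "w \<in> W" "\<forall>y\<in>X. pl_sat (v w) y"
proof -
  obtain xs where xs: "set xs = X" using finite_list[OF assms(2)] ..
  let ?conj = "foldr And xs (Imp (Var undefined) (Var undefined))"
  have "pl_consistent {?conj}"
    using assms(3) xs by (auto simp: pl_consistent_def pl_sat_foldr_And)
  then obtain w where "w \<in> W" "pl_sat (v w) ?conj"
    using assms(1) unfolding replete_def by blast
  with xs show thesis by (intro that) (auto simp: pl_sat_foldr_And)
qed

lemma insert_mat_subset_out4p: "insert a (mat H) \<subseteq> out4p H a"
  unfolding out4p_def pl_entails_def by auto

lemma out4p_sound:
  assumes "x \<in> out4p H a" "pl_sat val a" "\<forall>y\<in>mat H. pl_sat val y"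
  shows "pl_sat val x"
  using assms unfolding out4p_def pl_entails_def by auto

lemma replete_sat_out4p:
  assumes "replete W v" "finite H" "pl_consistent (out4p H a \<union> C)"
  obtains u where "u \<in> W" "pl_sat (v u) a" "\<forall>y\<in>mat H. pl_sat (v u) y"
proof -
  have "finite (insert a (mat H))" using assms(2) unfolding mat_def by simp
  moreover have "pl_consistent (insert a (mat H))"
    by (rule pl_consistent_subset[OF assms(3)]) (use insert_mat_subset_out4p in blast)
  ultimately obtain u where "u \<in> W" "\<forall>y\<in>insert a (mat H). pl_sat (v u) y"
    by (rule replete_sat_finite[OF assms(1)])
  then show thesis by (intro that) auto
qed

lemma maxf_nonempty:
  assumes "finite N" "pl_consistent (out4p {} a \<union> C)"
  shows "maxf N a C \<noteq> {}"
proof -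
  let ?S = "{H. H \<subseteq> N \<and> pl_consistent (out4p H a \<union> C)}"
  have "finite ?S" using assms(1) by (simp add: finite_subset[of _ "Pow N"])
  moreover have "{} \<in> ?S" using assms(2) by simp
  ultimately obtain H where "H \<in> ?S" "\<forall>H'\<in>?S. H \<subseteq> H' \<longrightarrow> H = H'"
    using finite_has_maximal[of ?S] by blast
  then have "H \<in> maxf N a C" unfolding maxf_def by auto
  then show ?thesis by blast
qed

lemma finite_Dov: "finite Ro \<Longrightarrow> finite (Dov G Ro r)"
  unfolding Dov_def by simp

lemma pl_sat_fst_transl:
  assumes "finite Ro"
  shows "pl_sat val (fst (transl G Ro r)) \<longleftrightarrow>
    pl_sat val (body r) \<and> (\<forall>rj\<in>Dov G Ro r. \<not> pl_sat val (body rj))"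
proof -
  have "set (SOME xs. set xs = Dov G Ro r \<and> distinct xs) = Dov G Ro r"
    using someI_ex[OF finite_distinct_list[OF finite_Dov[OF assms]]] by blast
  moreover have "pl_sat val (foldr (\<lambda>rj acc. And acc (Neg (body rj))) xs b) \<longleftrightarrow>
      pl_sat val b \<and> (\<forall>rj\<in>set xs. \<not> pl_sat val (body rj))" for xs b
    by (induction xs) auto
  ultimately show ?thesis unfolding transl_def by auto
qed

lemma snd_transl [simp]: "snd (transl G Ro r) = head r"
  unfolding transl_def by simp

lemma mem_Vset_iff_transl_violated:
  assumes "finite Ro"
  shows "r \<in> Vset G Ro val \<longleftrightarrow>
    r \<in> Ro \<and> pl_sat val (fst (transl G Ro r)) \<and> \<not> pl_sat val (head r)"
  using pl_sat_fst_transl[OF assms] unfolding Vset_def Dov_def by auto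

lemma mat_transl_sat_if_Vset_subset:
  assumes "finite Ro" "H \<subseteq> transl_set G Ro"
    and "Vset G Ro val \<subseteq> Vset G Ro val'" and "\<forall>y\<in>mat H. pl_sat val' y"
  shows "\<forall>y\<in>mat H. pl_sat val y"
proof
  fix y assume "y \<in> mat H"
  then obtain b h where bh: "(b, h) \<in> H" and y: "y = Imp b h"
    unfolding mat_def by auto
  then obtain r where r: "r \<in> Ro" "transl G Ro r = (b, h)"
    using assms(2) unfolding transl_set_def by auto
  then have b: "b = fst (transl G Ro r)" and h: "h = head r"
    by (metis fst_conv, metis snd_conv snd_transl)
  have "pl_sat val' y"
    using assms(4) bh y unfolding mat_def by force
  then have "r \<notin> Vset G Ro val'"
    using y b h mem_Vset_iff_transl_violated[OF assms(1)] by auto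
  then have "r \<notin> Vset G Ro val" using assms(3) by blast
  then show "pl_sat val y"
    using y b h r(1) mem_Vset_iff_transl_violated[OF assms(1)] by auto
qed

lemma maxrel_geN: "X \<subseteq> W \<Longrightarrow> maxrel (geN W) X = X"
  unfolding maxrel_def geN_def by auto

lemma obl_true_if_undominated_witness:
  assumes "u' \<in> W" "pl_sat (v u') a" "pl_sat (v u') x"
    and "\<And>u. u \<in> W \<Longrightarrow> pl_sat (v u) a \<Longrightarrow> \<not> pl_sat (v u) x \<Longrightarrow> \<not> geI G Ro v u u'"
  shows "obl_true G Ro W v w (a, x)"
proof -
  have "u' \<in> ext W v (And a x)" using assms(1-3) unfolding ext_def by simp
  moreover have "\<not> geI G Ro v u u'" if "u \<in> ext W v (And a (Neg x))" for u
    using that assms(4) unfolding ext_def by simp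
  ultimately show ?thesis
    unfolding obl_true_def strong_ge_def body_def head_def
    by (subst (1 2) maxrel_geN) (auto simp: ext_def)
qed

theorem theorem4:
  fixes Ro :: "'p obl set" and a x :: "'p form"
    and W :: "'w set" and v :: "'w \<Rightarrow> 'p \<Rightarrow> bool" and w :: 'w
  assumes "finite Ro"
    and "x \<in> \<Inter> (outf (transl_set {Dia (embed a)} Ro) a {a})"
    and "W \<noteq> {}" and "replete W v"
    and "w \<in> W" and "\<forall>g\<in>{Dia (embed a)}. mtrue W v w g"
  shows "obl_true {Dia (embed a)} Ro W v w (a, x)"
proof -
  let ?G = "{Dia (embed a)}"
  obtain u0 where "pl_sat (v u0) a" using assms(6) by (auto simp: Dia_def)
  then have "pl_consistent (out4p {} a \<union> {a})"
    unfolding pl_consistent_def out4p_def pl_entails_def mat_def by auto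
  then obtain H where H: "H \<in> maxf (transl_set ?G Ro) a {a}"
    using maxf_nonempty assms(1) unfolding transl_set_def by blast
  then have x: "x \<in> out4p H a" and HN: "H \<subseteq> transl_set ?G Ro"
    using assms(2) unfolding outf_def maxf_def by auto
  have "finite H"
    using HN assms(1) unfolding transl_set_def by (meson finite_imageI finite_subset)
  moreover have "pl_consistent (out4p H a \<union> {a})" using H unfolding maxf_def by simp
  ultimately obtain u' where "u' \<in> W" and u'_a: "pl_sat (v u') a"
    and u'_mat: "\<forall>y\<in>mat H. pl_sat (v u') y"
    by (rule replete_sat_out4p[OF assms(4)])
  show ?thesis
  proof (rule obl_true_if_undominated_witness)
    show "u' \<in> W" "pl_sat (v u') a" by fact+
    show "pl_sat (v u') x" using out4p_sound[OF x u'_a u'_mat] .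
    fix u assume "pl_sat (v u) a" "\<not> pl_sat (v u) x"
    then have "\<not> (\<forall>y\<in>mat H. pl_sat (v u) y)" using out4p_sound[OF x] by blast
    then show "\<not> geI ?G Ro v u u'"
      using mat_transl_sat_if_Vset_subset[OF assms(1) HN _ u'_mat] unfolding geI_def by blast
  qed
qed

end
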